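(* Assume the standing hypotheses (H). Let $0\le K\in L^4_{\mathfrak P}$. There is $K_{2,3}\in L^2_{\mathfrak P}$ (depending on $K$) such that for every $(t,\mathbf x,y)\in\mathbf D\times\mathbb R$, $\boldsymbol\zeta\in\mathbf Z$ and $\psi>0$ with $\|\boldsymbol\zeta-\boldsymbol\zeta^0(\Sigma)\|\le K(t,\mathbf x)\psi$, $$|H^\psi_2(t,\mathbf x,y;\boldsymbol\zeta)|\le K_{2,3}(t,\mathbf x)\Big(1+\frac{-U''(y)}{U'(y)}\Big)\psi^2,\qquad |H_3(t,\mathbf x;\boldsymbol\zeta)-H_3(t,\mathbf x;\boldsymbol\zeta^0(\Sigma))|\le K_{2,3}(t,\mathbf x)\psi.$$
   Context: Setting. Fix $T>0$, $S_0>0$, $\Sigma_0>0$, $A_0\in\mathbb R$. $\Omega$: continuous paths $\omega=(\omega^S,\omega^\Sigma,\omega^A):[0,T]\to\mathbb R^3$ with $\omega_0=(S_0,\Sigma_0,A_0)$ (uniform topology, Borel $\sigma$-algebra $\mathcal F$); $S,\Sigma,A$ coordinate processes, $\mathbb F$ their raw filtration, $M_t=\sup_{u\le t}S_u$, $\mathbf X_t=(S_t,A_t,M_t,\Sigma_t)$. $\mathbf G=\mathbb R_+\times\mathbb R\times\mathbb R_+$, $\mathbf D^0=(0,T)\times\mathbf G\times\mathbb R_+$ (points $(t,\mathbf x)$, $\mathbf x=(S,A,M,\Sigma)$); $0<\underline\Sigma<\Sigma_0<\overline\Sigma$, $\mathbf D=(0,T)\times\mathbf G\times[\underline\Sigma,\overline\Sigma]$.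 $\|\cdot\|$ Euclidean norm, $\mathbf e_4$ fourth unit vector, $x^-=\max(-x,0)$. Call: $\mathcal C(t,S,\Sigma)$ with $\mathcal C_t+\frac12\Sigma^2S^2\mathcal C_{SS}=0$, $\mathcal C(T_{\mathsf C},S,\Sigma)=\mathsf C(S)$. $b^{\mathcal C}(t,\mathbf x;\boldsymbol\zeta)=\nu\mathcal C_\Sigma+\frac12S^2\mathcal C_{SS}(\sigma^2-\Sigma^2)+\sigma\eta S\mathcal C_{S\Sigma}+\frac12(\eta^2+\xi)\mathcal C_{\Sigma\Sigma}$ for $\boldsymbol\zeta=(\nu,\sigma,\eta,\xi)$. Models: $\mathfrak P^{00}$ = probability measures $P$ on $(\Omega,\mathcal F)$ with progressively measurable $\boldsymbol\zeta^P=(\nu^P,\sigma^P,\eta^P,\xi^P)$ such that $S$, $\Sigma-\int_0^\cdot\nu^P_tdt$ are continuous local $P$-martingales with $d\langle S\rangle_t=S_t^2(\sigma^P_t)^2dt$, $d\langle\Sigma\rangle_t=((\eta^P_t)^2+\xi^P_t)dt$, $d\langle S,\Sigma\rangle_t=S_t\sigma^P_t\eta^P_tdt$, $S,\Sigma>0$, $\xi^P\ge0$, $b^{\mathcal C}(t,\mathbf X_t;\boldsymbol\zeta^P_t)=0$ $dt\times P$-a.e.; for Borel $\alpha,\beta,\gamma,\delta:[0,T]\times\mathbb R^3\to\mathbb R$, $\mathfrak P^0$ = those $P$ with $dA_t=(\alpha+\frac12(\sigma^P_t)^2\beta)dt+\gamma dS_t+\delta dM_t$. $\boldsymbol\zeta^0(\Sigma)=(0,\Sigma,0,0)^\top$;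 reference model: $\boldsymbol\zeta^P_t=\boldsymbol\zeta^0(\Sigma_t)$ a.e. Non-traded option: $\mathcal V(\cdot,\Sigma)$ solves $\mathcal V_t+(\alpha+\frac12\beta\Sigma^2)\mathcal V_A+\frac12\Sigma^2S^2(\mathcal V_{SS}+2\gamma\mathcal V_{SA}+\gamma^2\mathcal V_{AA})=0$ on $(0,T)\times\mathbf G$, $\delta\mathcal V_A+\mathcal V_M=0$ on $\{S\ge M\}$, $\mathcal V(T,\cdot,\Sigma)=\mathsf V$. $\Delta=\mathcal V_S+\gamma\mathcal V_A$, $\Gamma=\mathcal V_{SS}+2\gamma\mathcal V_{SA}+\gamma^2\mathcal V_{AA}$, $\frac{\partial\Delta}{\partial\Sigma}:=\mathcal V_{S\Sigma}+\gamma\mathcal V_{A\Sigma}$. P&L: $V_t=\mathcal V(t,\mathbf X_t)$, $C_t=\mathcal C(t,S_t,\Sigma_t)$; strategies $\boldsymbol\upsilon=(\theta,\phi)$ real locally bounded progressive; $Y^{\boldsymbol\upsilon,P}_t=Y_0+V_0+\int_0^t\theta dS+\int_0^t\phi dC-V_t$. Preferences: $\Psi=\mathrm{diag}(\psi_\nu,\psi_\sigma,\psi_\eta,\psi_\xi)$, positive; a utility $U$, strategy set $\mathfrak Y$, model set $\mathfrak P\subset\mathfrak P^0$. Candidate control: $\mathbf c=(\mathcal C_\Sigma,\Sigma S^2\mathcal C_{SS},\Sigma S\mathcal C_{S\Sigma},\frac12\mathcal C_{\Sigma\Sigma})^\top$, $\mathbf v=(\mathcal V_\Sigma,\Sigma(\beta\mathcal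 V_A+S^2\Gamma),\Sigma S\frac{\partial\Delta}{\partial\Sigma},\frac12\mathcal V_{\Sigma\Sigma})^\top$; $\lambda=\frac{\mathbf c^\top\Psi\mathbf v}{\mathbf c^\top\Psi\mathbf c}$ if $\mathcal V_{\Sigma\Sigma}-\frac{\mathbf c^\top\Psi\mathbf v}{\mathbf c^\top\Psi\mathbf c}\mathcal C_{\Sigma\Sigma}\ge0$, else $\lambda=\frac{\mathbf c^\top\Psi\mathbf v-\frac14\mathcal C_{\Sigma\Sigma}\mathcal V_{\Sigma\Sigma}\psi_\xi}{\mathbf c^\top\Psi\mathbf c-\frac14\mathcal C_{\Sigma\Sigma}^2\psi_\xi}$; $\mu=\frac12(\mathcal V_{\Sigma\Sigma}-\lambda\mathcal C_{\Sigma\Sigma})^-$; $\widetilde{\boldsymbol\zeta}=\Psi(\mathbf v-\lambda\mathbf c+\mu\mathbf e_4)$; $\boldsymbol\zeta^\psi=\boldsymbol\zeta^0(\Sigma)+\widetilde{\boldsymbol\zeta}\mathbf 1_{\{\underline\Sigma<\Sigma<\overline\Sigma\}}\psi$; $\widetilde g=\mathbf v^\top\widetilde{\boldsymbol\zeta}$. Cash-equivalent PDE: for $\Sigma\in[\underline\Sigma,\overline\Sigma]$, $\widetilde w_t+(\alpha+\frac12\beta\Sigma^2)\widetilde w_A+\frac12\Sigma^2S^2(\widetilde w_{SS}+2\gamma\widetilde w_{SA}+\gamma^2\widetilde w_{AA})+\frac12\widetilde g(\cdot,\Sigma)=0$ on $(0,T)\times\mathbf G$, $\delta\widetilde w_A+\widetilde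 w_M=0$ on $\{S\ge M\}$, $\widetilde w(T,\cdot,\Sigma)=0$. $L^p_{\mathfrak P}$: Borel $K$ on $\mathbf D^0$ with $\sup_{P\in\mathfrak P}E^P[\int_0^T|K(t,\mathbf X_t)|^pdt]^{1/p}<\infty$. Candidate asymptotic model family: $(P^\psi)_{\psi\in(0,\psi_0)}\subset\mathfrak P$, $\psi_0\in(0,1)$, with $K_0\in L^4_{\mathfrak P}$ and $\|\boldsymbol\zeta^{P^\psi}_t-\boldsymbol\zeta^\psi(t,\mathbf X_t)\|\le K_0(t,\mathbf X_t)\psi^2$ $dt\times P^\psi$-a.e. Assumption (A): (a) $\exists K_{\mathfrak Y}$: $Y^{\boldsymbol\upsilon,P}>-K_{\mathfrak Y}$ $dt\times P$-a.e. for all $\boldsymbol\upsilon\in\mathfrak Y$, $P\in\mathfrak P$; (b) $\mathfrak P$ contains a candidate asymptotic model family and a reference model, and constants $\underline\nu<0<\overline\nu$, $0<\underline\sigma<\underline\Sigma$, $\overline\Sigma<\overline\sigma$, $\underline\eta<0<\overline\eta$, $\overline\xi>0$ bound $\nu^P,\sigma^P,\eta^P,\xi^P,\Sigma$ in $[\underline\nu,\overline\nu],[\underline\sigma,\overline\sigma],[\underline\eta,\overline\eta],[0,\overline\xi],[\underline\Sigma,\overline\Sigma]$ $dt\times P$-a.e. for all $P\in\mathfrak P$; (c) $T_{\mathsf C}\ge T$, $\mathcal C\in C^{1,2,2}((0,T_{\mathsf C})\times\mathbb R_+^2)\cap C([0,T_{\mathsf C}]\times\overline{\mathbb R}_+^2)$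 solves the call PDE classically for $\Sigma\in[\underline\Sigma,\overline\Sigma]$, $\mathcal C_\Sigma\ne0$ and $|\mathcal C_{\Sigma\Sigma}|\le K_{\mathcal C}(|\mathcal C_\Sigma|+|S^2\mathcal C_{SS}|+|S\mathcal C_{S\Sigma}|)$ on $(0,T)\times\mathbb R_+\times[\underline\Sigma,\overline\Sigma]$ with $K_{\mathcal C}\in L^2_{\mathfrak P}$; (d) $\mathcal V\in C^{1,2,2,1,2}(\mathbf D^0)\cap C(\overline{\mathbf D^0})$ solves the $\mathcal V$-PDE classically for $\Sigma\in[\underline\Sigma,\overline\Sigma]$, $|\mathcal V_\Sigma|,|\beta\mathcal V_A+S^2\Gamma|,|S\frac{\partial\Delta}{\partial\Sigma}|,|\mathcal V_{\Sigma\Sigma}|\le K_{\mathcal V}$ on $\mathbf D$; (e) $\widetilde w\in C^{1,2,2,1,2}(\mathbf D^0)\cap C(\overline{\mathbf D^0})$ solves the cash-equivalent PDE classically for $\Sigma\in[\underline\Sigma,\overline\Sigma]$, $0\le\widetilde w\le K_{\widetilde w}$ on $\mathbf D$, and $\widetilde w_\Sigma,S(\widetilde w_S+\gamma\widetilde w_A),\beta\widetilde w_A+S^2(\widetilde w_{SS}+2\gamma\widetilde w_{SA}+\gamma^2\widetilde w_{AA}),S(\widetilde w_{S\Sigma}+\gamma\widetilde w_{A\Sigma}),\widetilde w_{\Sigma\Sigma}\in L^4_{\mathfrak P}$; (f) $U\in C^3(\mathbb R)$, $U'>0$, $U''<0$, $-U''/U'$ nonincreasing. Additional notation. $\mathbf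 Z=[\underline\nu,\overline\nu]\times[\underline\sigma,\overline\sigma]\times[\underline\eta,\overline\eta]\times[0,\overline\xi]$. $b^{\mathcal V}(t,\mathbf x;\boldsymbol\zeta)=\nu\mathcal V_\Sigma+\frac12(\beta\mathcal V_A+S^2\Gamma)(\sigma^2-\Sigma^2)+\sigma\eta S\frac{\partial\Delta}{\partial\Sigma}+\frac12(\eta^2+\xi)\mathcal V_{\Sigma\Sigma}$. $H^\psi_2(t,\mathbf x,y;\boldsymbol\zeta)=-\frac12\begin{pmatrix}\sigma-\Sigma\\\eta\end{pmatrix}^\top\begin{pmatrix}\beta\mathcal V_A+S^2\Gamma&S\frac{\partial\Delta}{\partial\Sigma}\\S\frac{\partial\Delta}{\partial\Sigma}&\mathcal V_{\Sigma\Sigma}\end{pmatrix}\begin{pmatrix}\sigma-\Sigma\\\eta\end{pmatrix}+\frac{U''(y)}{U'(y)}b^{\mathcal V}(t,\mathbf x;\boldsymbol\zeta)\widetilde w(t,\mathbf x)\psi$. $H_3(t,\mathbf x;\boldsymbol\zeta)=\nu\widetilde w_\Sigma+(\alpha+\frac12\beta\sigma^2)\widetilde w_A+\frac12\sigma^2S^2(\widetilde w_{SS}+2\gamma\widetilde w_{SA}+\gamma^2\widetilde w_{AA})+\sigma\eta S(\widetilde w_{S\Sigma}+\gamma\widetilde w_{A\Sigma})+\frac12(\eta^2+\xi)\widetilde w_{\Sigma\Sigma}$. Delta-vega hedge $\boldsymbol\upsilon^\star_t=(\Delta-\frac{\mathcal V_\Sigma}{\mathcal C_\Sigma}\mathcal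 C_S,\frac{\mathcal V_\Sigma}{\mathcal C_\Sigma})(t,\mathbf X_t)$. Standing hypotheses (H): Assumption (A) holds, $\boldsymbol\upsilon^\star\in\mathfrak Y$, and $(P^\psi)_{\psi\in(0,\psi_0)}\subset\mathfrak P$ is a candidate asymptotic model family. *)

theory Defs
  imports "HOL-Probability.Probability"
begin

(* A point x = (S, A, M, Sig) of the state space; time t is a separate argument. *)
type_synonym state = "real \<times> real \<times> real \<times> real"
type_synonym sfun = "real \<Rightarrow> state \<Rightarrow> real"
type_synonym coef = "real \<Rightarrow> real \<times> real \<times> real \<Rightarrow> real"
(* paths omega = (omega^S, omega^Sigma, omega^A) *)
type_synonym path = "real \<Rightarrow> real \<times> real \<times> real"

definition stS :: "state \<Rightarrow> real" where "stS x = fst x"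
definition stA :: "state \<Rightarrow> real" where "stA x = fst (snd x)"
definition stM :: "state \<Rightarrow> real" where "stM x = fst (snd (snd x))"
definition stSig :: "state \<Rightarrow> real" where "stSig x = snd (snd (snd x))"

definition pd_t :: "sfun \<Rightarrow> sfun" where
  "pd_t f = (\<lambda>t x. deriv (\<lambda>\<tau>. f \<tau> x) t)"
definition pd_S :: "sfun \<Rightarrow> sfun" where
  "pd_S f = (\<lambda>t x. deriv (\<lambda>s. f t (s, stA x, stM x, stSig x)) (stS x))"
definition pd_A :: "sfun \<Rightarrow> sfun" where
  "pd_A f = (\<lambda>t x. deriv (\<lambda>a. f t (stS x, a, stM x, stSig x)) (stA x))"
definition pd_M :: "sfun \<Rightarrow> sfun" where
  "pd_M f = (\<lambda>t x. deriv (\<lambda>m. f t (stS x, stA x, m, stSig x)) (stM x))"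
definition pd_Sig :: "sfun \<Rightarrow> sfun" where
  "pd_Sig f = (\<lambda>t x. deriv (\<lambda>g. f t (stS x, stA x, stM x, g)) (stSig x))"

definition ev :: "coef \<Rightarrow> real \<Rightarrow> state \<Rightarrow> real" where
  "ev \<alpha> t x = \<alpha> t (stS x, stA x, stM x)"

definition GammaOp :: "coef \<Rightarrow> sfun \<Rightarrow> sfun" where
  "GammaOp \<gamma> f = (\<lambda>t x. pd_S (pd_S f) t x + 2 * ev \<gamma> t x * pd_A (pd_S f) t x
                          + (ev \<gamma> t x)^2 * pd_A (pd_A f) t x)"
definition DeltaSig :: "coef \<Rightarrow> sfun \<Rightarrow> sfun" where
  "DeltaSig \<gamma> f = (\<lambda>t x. pd_Sig (pd_S f) t x + ev \<gamma> t x * pd_Sig (pd_A f) t x)"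

definition genL :: "coef \<Rightarrow> coef \<Rightarrow> coef \<Rightarrow> sfun \<Rightarrow> sfun" where
  "genL \<alpha> \<beta> \<gamma> f = (\<lambda>t x. pd_t f t x + (ev \<alpha> t x + 1/2 * ev \<beta> t x * (stSig x)^2) * pd_A f t x
                  + 1/2 * (stSig x)^2 * (stS x)^2 * GammaOp \<gamma> f t x)"

definition liftC :: "(real \<Rightarrow> real \<Rightarrow> real \<Rightarrow> real) \<Rightarrow> sfun" where
  "liftC C = (\<lambda>t x. C t (stS x) (stSig x))"

fun wdot :: "state \<Rightarrow> state \<Rightarrow> state \<Rightarrow> real" where
  "wdot (a,b,c,d) (u1,u2,u3,u4) (w1,w2,w3,w4) = a*u1*w1 + b*u2*w2 + c*u3*w3 + d*u4*w4"
definition dot4 :: "state \<Rightarrow> state \<Rightarrow> real" where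
  "dot4 u w = wdot (1,1,1,1) u w"
fun diagmul :: "state \<Rightarrow> state \<Rightarrow> state" where
  "diagmul (a,b,c,d) (u1,u2,u3,u4) = (a*u1, b*u2, c*u3, d*u4)"
definition e4 :: state where "e4 = (0,0,0,1)"
definition negpart :: "real \<Rightarrow> real" where "negpart r = max (- r) 0"

definition cvec :: "(real \<Rightarrow> real \<Rightarrow> real \<Rightarrow> real) \<Rightarrow> real \<Rightarrow> state \<Rightarrow> state" where
  "cvec C t x = (pd_Sig (liftC C) t x,
                 stSig x * (stS x)^2 * pd_S (pd_S (liftC C)) t x,
                 stSig x * stS x * pd_Sig (pd_S (liftC C)) t x,
                 1/2 * pd_Sig (pd_Sig (liftC C)) t x)"

definition vvec :: "coef \<Rightarrow> coef \<Rightarrow> sfun \<Rightarrow> real \<Rightarrow> state \<Rightarrow> state" where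
  "vvec \<beta> \<gamma> V t x = (pd_Sig V t x,
                 stSig x * (ev \<beta> t x * pd_A V t x + (stS x)^2 * GammaOp \<gamma> V t x),
                 stSig x * stS x * DeltaSig \<gamma> V t x,
                 1/2 * pd_Sig (pd_Sig V) t x)"

(* Psi = (psi_nu, psi_sigma, psi_eta, psi_xi) is the diagonal of the preference matrix *)
definition lam :: "state \<Rightarrow> (real \<Rightarrow> real \<Rightarrow> real \<Rightarrow> real) \<Rightarrow> coef \<Rightarrow> coef \<Rightarrow> sfun \<Rightarrow> real \<Rightarrow> state \<Rightarrow> real" where
  "lam Psi C \<beta> \<gamma> V t x =
     (let c = cvec C t x; v = vvec \<beta> \<gamma> V t x;
          CSS = pd_Sig (pd_Sig (liftC C)) t x; VSS = pd_Sig (pd_Sig V) t x;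
          pxi = snd (snd (snd Psi)); r = wdot Psi c v / wdot Psi c c
      in if VSS - r * CSS \<ge> 0 then r
         else (wdot Psi c v - 1/4 * CSS * VSS * pxi) / (wdot Psi c c - 1/4 * CSS^2 * pxi))"

definition muf :: "state \<Rightarrow> (real \<Rightarrow> real \<Rightarrow> real \<Rightarrow> real) \<Rightarrow> coef \<Rightarrow> coef \<Rightarrow> sfun \<Rightarrow> real \<Rightarrow> state \<Rightarrow> real" where
  "muf Psi C \<beta> \<gamma> V t x = 1/2 * negpart (pd_Sig (pd_Sig V) t x
                       - lam Psi C \<beta> \<gamma> V t x * pd_Sig (pd_Sig (liftC C)) t x)"

definition zetatilde :: "state \<Rightarrow> (real \<Rightarrow> real \<Rightarrow> real \<Rightarrow> real) \<Rightarrow> coef \<Rightarrow> coef \<Rightarrow> sfun \<Rightarrow> real \<Rightarrow> state \<Rightarrow> state" where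
  "zetatilde Psi C \<beta> \<gamma> V t x = diagmul Psi (vvec \<beta> \<gamma> V t x - lam Psi C \<beta> \<gamma> V t x *\<^sub>R cvec C t x
                                           + muf Psi C \<beta> \<gamma> V t x *\<^sub>R e4)"

definition gtilde :: "state \<Rightarrow> (real \<Rightarrow> real \<Rightarrow> real \<Rightarrow> real) \<Rightarrow> coef \<Rightarrow> coef \<Rightarrow> sfun \<Rightarrow> real \<Rightarrow> state \<Rightarrow> real" where
  "gtilde Psi C \<beta> \<gamma> V t x = dot4 (vvec \<beta> \<gamma> V t x) (zetatilde Psi C \<beta> \<gamma> V t x)"

definition zeta0 :: "real \<Rightarrow> state" where "zeta0 Sg = (0, Sg, 0, 0)"

definition bV :: "coef \<Rightarrow> coef \<Rightarrow> sfun \<Rightarrow> real \<Rightarrow> state \<Rightarrow> state \<Rightarrow> real" where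
  "bV \<beta> \<gamma> V t x \<zeta> = (case \<zeta> of (nu, sg, eta, xi) \<Rightarrow>
      nu * pd_Sig V t x
    + 1/2 * (ev \<beta> t x * pd_A V t x + (stS x)^2 * GammaOp \<gamma> V t x) * (sg^2 - (stSig x)^2)
    + sg * eta * stS x * DeltaSig \<gamma> V t x
    + 1/2 * (eta^2 + xi) * pd_Sig (pd_Sig V) t x)"

definition H2 :: "coef \<Rightarrow> coef \<Rightarrow> sfun \<Rightarrow> (real \<Rightarrow> real) \<Rightarrow> sfun \<Rightarrow> real \<Rightarrow> real \<Rightarrow> state \<Rightarrow> real \<Rightarrow> state \<Rightarrow> real" where
  "H2 \<beta> \<gamma> V U w \<psi> t x y \<zeta> = (case \<zeta> of (nu, sg, eta, xi) \<Rightarrow>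
      - 1/2 * ((sg - stSig x)^2 * (ev \<beta> t x * pd_A V t x + (stS x)^2 * GammaOp \<gamma> V t x)
               + 2 * (sg - stSig x) * eta * (stS x * DeltaSig \<gamma> V t x)
               + eta^2 * pd_Sig (pd_Sig V) t x)
    + deriv (deriv U) y / deriv U y * bV \<beta> \<gamma> V t x \<zeta> * w t x * \<psi>)"

definition H3 :: "coef \<Rightarrow> coef \<Rightarrow> coef \<Rightarrow> sfun \<Rightarrow> real \<Rightarrow> state \<Rightarrow> state \<Rightarrow> real" where
  "H3 \<alpha> \<beta> \<gamma> w t x \<zeta> = (case \<zeta> of (nu, sg, eta, xi) \<Rightarrow>
      nu * pd_Sig w t x
    + (ev \<alpha> t x + 1/2 * ev \<beta> t x * sg^2) * pd_A w t x
    + 1/2 * sg^2 * (stS x)^2 * GammaOp \<gamma> w t x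
    + sg * eta * stS x * DeltaSig \<gamma> w t x
    + 1/2 * (eta^2 + xi) * pd_Sig (pd_Sig w) t x)"

(* domains: R_+ read as (0,infinity) *)
definition D0 :: "real \<Rightarrow> (real \<times> state) set" where
  "D0 T = {(t, x). 0 < t \<and> t < T \<and> 0 < stS x \<and> 0 < stM x \<and> 0 < stSig x}"
definition Dom :: "real \<Rightarrow> real \<Rightarrow> real \<Rightarrow> (real \<times> state) set" where
  "Dom T lo hi = {(t, x). (t, x) \<in> D0 T \<and> lo \<le> stSig x \<and> stSig x \<le> hi}"
definition Zbox :: "real \<Rightarrow> real \<Rightarrow> real \<Rightarrow> real \<Rightarrow> real \<Rightarrow> real \<Rightarrow> real \<Rightarrow> state set" where
  "Zbox nl nh sl sh el eh xh = {(nu, sg, eta, xi). nl \<le> nu \<and> nu \<le> nh \<and> sl \<le> sg \<and> sg \<le> sh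
                                 \<and> el \<le> eta \<and> eta \<le> eh \<and> 0 \<le> xi \<and> xi \<le> xh}"

(* path space: continuous paths on [0,T] started at (S0,Sig0,A0), with the sigma-algebra
   generated by the coordinates (= Borel sigma-algebra of the uniform topology) *)
definition PathSpace :: "real \<Rightarrow> real \<Rightarrow> real \<Rightarrow> real \<Rightarrow> path measure" where
  "PathSpace T S0 Sg0 A0 =
     restrict_space (PiM {0..T} (\<lambda>_. borel))
       {\<omega> \<in> space (PiM {0..T} (\<lambda>_. (borel :: (real \<times> real \<times> real) measure))).
           continuous_on {0..T} \<omega> \<and> \<omega> 0 = (S0, Sg0, A0)}"

definition Xproc :: "path \<Rightarrow> real \<Rightarrow> state" where
  "Xproc \<omega> t = (fst (\<omega> t), snd (snd (\<omega> t)), Sup ((\<lambda>u. fst (\<omega> u)) ` {0..t}), fst (snd (\<omega> t)))"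

definition Lp :: "real \<Rightarrow> real \<Rightarrow> path measure set \<Rightarrow> sfun set" where
  "Lp p T Ps = {K. (\<lambda>(t, x). K t x) \<in> borel_measurable (restrict_space borel (D0 T)) \<and>
       (SUP P\<in>Ps. \<integral>\<^sup>+ \<omega>. (\<integral>\<^sup>+ t\<in>{0<..<T}. ennreal (\<bar>K t (Xproc \<omega> t)\<bar> powr p) \<partial>lborel) \<partial>P) < \<infinity>}"

definition call_ok :: "real \<Rightarrow> real \<Rightarrow> real \<Rightarrow> real \<Rightarrow> (real \<Rightarrow> real) \<Rightarrow> (real \<Rightarrow> real \<Rightarrow> real \<Rightarrow> real) \<Rightarrow> bool" where
  "call_ok T TC lo hi Cpay C \<longleftrightarrow> T \<le> TC \<and>
     (\<forall>t S Sg. 0 < t \<and> t < TC \<and> 0 < S \<and> lo \<le> Sg \<and> Sg \<le> hi \<longrightarrow>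
         deriv (\<lambda>\<tau>. C \<tau> S Sg) t + 1/2 * Sg^2 * S^2 * deriv (\<lambda>s. deriv (\<lambda>s'. C t s' Sg) s) S = 0) \<and>
     (\<forall>S Sg. 0 \<le> S \<and> lo \<le> Sg \<and> Sg \<le> hi \<longrightarrow> C TC S Sg = Cpay S)"

definition V_pde :: "coef \<Rightarrow> coef \<Rightarrow> coef \<Rightarrow> coef \<Rightarrow> real \<Rightarrow> real \<Rightarrow> real \<Rightarrow> (real \<times> real \<times> real \<Rightarrow> real) \<Rightarrow> sfun \<Rightarrow> bool" where
  "V_pde \<alpha> \<beta> \<gamma> \<delta> T lo hi Vpay V \<longleftrightarrow>
     (\<forall>(t, x) \<in> Dom T lo hi. genL \<alpha> \<beta> \<gamma> V t x = 0 \<and>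
          (stS x \<ge> stM x \<longrightarrow> ev \<delta> t x * pd_A V t x + pd_M V t x = 0)) \<and>
     (\<forall>x. 0 < stS x \<and> 0 < stM x \<and> lo \<le> stSig x \<and> stSig x \<le> hi \<longrightarrow> V T x = Vpay (stS x, stA x, stM x))"

definition w_pde :: "state \<Rightarrow> (real \<Rightarrow> real \<Rightarrow> real \<Rightarrow> real) \<Rightarrow> coef \<Rightarrow> coef \<Rightarrow> coef \<Rightarrow> coef \<Rightarrow> real \<Rightarrow> real \<Rightarrow> real \<Rightarrow> sfun \<Rightarrow> sfun \<Rightarrow> bool" where
  "w_pde Psi C \<alpha> \<beta> \<gamma> \<delta> T lo hi V w \<longleftrightarrow>
     (\<forall>(t, x) \<in> Dom T lo hi. genL \<alpha> \<beta> \<gamma> w t x + 1/2 * gtilde Psi C \<beta> \<gamma> V t x = 0 \<and>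
          (stS x \<ge> stM x \<longrightarrow> ev \<delta> t x * pd_A w t x + pd_M w t x = 0)) \<and>
     (\<forall>x. 0 < stS x \<and> 0 < stM x \<and> lo \<le> stSig x \<and> stSig x \<le> hi \<longrightarrow> w T x = 0)"

definition utility_ok :: "(real \<Rightarrow> real) \<Rightarrow> bool" where
  "utility_ok U \<longleftrightarrow>
     (\<forall>y. U differentiable at y) \<and> (\<forall>y. deriv U differentiable at y) \<and>
     (\<forall>y. deriv (deriv U) differentiable at y) \<and> continuous_on UNIV (deriv (deriv (deriv U))) \<and>
     (\<forall>y. deriv U y > 0) \<and> (\<forall>y. deriv (deriv U) y < 0) \<and>
     antimono (\<lambda>y. - deriv (deriv U) y / deriv U y)"

end

theory Submission
  imports Defs
begin

(* With zeta = (nu, sg, eta, xi), every component of zeta - zeta0(Sigma) is bounded by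
   |zeta - zeta0(Sigma)| <= K psi.  The first part of H2 is a quadratic form in (sg - Sigma, eta)
   whose coefficients are bounded by K_V, hence of order K^2 psi^2.  Both b^V(zeta) and
   H3(zeta) - H3(zeta0(Sigma)) are of the form
     nu a1 + 1/2 (sg^2 - Sigma^2) a2 + sg eta a3 + 1/2 (eta^2 + xi) a4,
   which is linear in zeta - zeta0(Sigma) up to the bounded factors sg + Sigma and eta; the
   coefficients a are the sensitivities of V (bounded) resp. of w (in L^4).  Hence
   K23 = c (1 + K + sum of the |sensitivities of w|)^2 works, and it lies in L^2 because the
   square of a sum of L^4 functions is in L^2.  That last step is where the measure theory is:
   it needs (omega, t) |-> (t, X_t(omega)) to be jointly measurable on path space, the running
   maximum M_t being a countable supremum over rational times. *)

lemma PathSpace_path_continuous: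
  assumes "sets N = sets (PathSpace T S0 Sg0 A0)" "\<omega> \<in> space N"
  shows "continuous_on {0..T} \<omega> \<and> \<omega> 0 = (S0, Sg0, A0)"
proof -
  have "space N = space (PathSpace T S0 Sg0 A0)" using assms(1) by (rule sets_eq_imp_space_eq)
  then show ?thesis using assms(2) unfolding PathSpace_def by (auto simp: space_restrict_space)
qed

lemma measurable_path_eval:
  assumes "sets N = sets (PathSpace T S0 Sg0 A0)" "q \<in> {0..T}"
  shows "(\<lambda>\<omega>. \<omega> q) \<in> borel_measurable N"
proof -
  have "(\<lambda>\<omega>. \<omega> q) \<in> borel_measurable (PathSpace T S0 Sg0 A0)"
    unfolding PathSpace_def
    by (rule measurable_restrict_space1) (rule measurable_component_singleton[OF assms(2)])
  then show ?thesis using measurable_cong_sets[OF assms(1) refl] by blast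
qed

lemma LIMSEQ_ceiling_grid:
  fixes s :: real
  shows "(\<lambda>n. of_int \<lceil>real (Suc n) * s\<rceil> / real (Suc n)) \<longlonglongrightarrow> s"
proof (rule tendsto_sandwich[of "\<lambda>n. s" _ _ "\<lambda>n. s + 1 / real (Suc n)"])
  have "s \<le> of_int \<lceil>real (Suc n) * s\<rceil> / real (Suc n)
      \<and> of_int \<lceil>real (Suc n) * s\<rceil> / real (Suc n) \<le> s + 1 / real (Suc n)" for n
    using le_of_int_ceiling[of "real (Suc n) * s"] of_int_ceiling_le_add_one[of "real (Suc n) * s"]
    by (simp add: field_simps del: of_nat_Suc)
  then show "\<forall>\<^sub>F n in sequentially. s \<le> of_int \<lceil>real (Suc n) * s\<rceil> / real (Suc n)"
    "\<forall>\<^sub>F n in sequentially. of_int \<lceil>real (Suc n) * s\<rceil> / real (Suc n) \<le> s + 1 / real (Suc n)"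
    by auto
  show "(\<lambda>n. s + 1 / real (Suc n)) \<longlonglongrightarrow> s"
    using tendsto_add[OF tendsto_const LIMSEQ_Suc[OF lim_inverse_n'[unfolded inverse_eq_divide]], of s] by simp
qed simp

(* t is approximated from above by grid points; each approximation is a countable case
   distinction over coordinate evaluations, and the paths are continuous. *)
lemma measurable_path_eval_joint:
  assumes N: "sets N = sets (PathSpace T S0 Sg0 A0)" and I: "I \<subseteq> {0..T}" "0 \<le> T"
  shows "(\<lambda>z. fst z (snd z)) \<in> borel_measurable (restrict_space (N \<Otimes>\<^sub>M lborel) (space N \<times> I))"
proof -
  define c where "c n s = max 0 (min T (of_int \<lceil>real (Suc n) * s\<rceil> / real (Suc n)))" for n s
  let ?R = "restrict_space (N \<Otimes>\<^sub>M lborel) (space N \<times> I)"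
  have "(\<lambda>z. fst z (c n (snd z))) \<in> borel_measurable ?R" for n
  proof -
    have "(\<lambda>z. fst z (max 0 (min T (of_int k / real (Suc n))))) \<in> borel_measurable ?R" for k
      using I by (intro measurable_restrict_space1 measurable_compose[OF measurable_fst measurable_path_eval[OF N]])
        (auto simp: max_def min_def)
    moreover have "(\<lambda>z. \<lceil>real (Suc n) * snd z\<rceil>) \<in> measurable ?R (count_space UNIV)"
      by (rule measurable_compose[OF _ measurable_real_ceiling]) (rule measurable_restrict_space1, measurable)
    ultimately show ?thesis unfolding c_def by (rule measurable_compose_countable)
  qed
  then show ?thesis
  proof (rule borel_measurable_LIMSEQ_metric)
    fix z assume "z \<in> space ?R"
    then have \<omega>: "fst z \<in> space N" and s: "snd z \<in> {0..T}"
      using I(1) by (auto simp: space_restrict_space space_pair_measure)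
    have "(\<lambda>n. c n (snd z)) \<longlonglongrightarrow> max 0 (min T (snd z))"
      unfolding c_def by (intro tendsto_intros LIMSEQ_ceiling_grid)
    then have lim: "(\<lambda>n. c n (snd z)) \<longlonglongrightarrow> snd z" using s by simp
    have "\<forall>\<^sub>F n in sequentially. c n (snd z) \<in> {0..T}" using I(2) by (simp add: c_def)
    from continuous_on_tendsto_compose[OF PathSpace_path_continuous[OF N \<omega>, THEN conjunct1] lim s this]
    show "(\<lambda>n. fst z (c n (snd z))) \<longlonglongrightarrow> fst z (snd z)" by (simp add: o_def)
  qed
qed

lemma Sup_image_eq_SUP_Rats:
  fixes f :: "real \<Rightarrow> real"
  assumes cont: "continuous_on {0..T} f" and t: "0 \<le> t" "t < T"
  shows "Sup (f ` {0..t}) = (SUP q\<in>\<rat> \<inter> {0..T}. if q \<le> t then f q else f t)"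
proof -
  let ?Q = "\<rat> \<inter> {0..T}"
  let ?F = "\<lambda>q. if q \<le> t then f q else f t"
  have "continuous_on {0..t} f" using t by (intro continuous_on_subset[OF cont]) auto
  then have cpt: "compact (f ` {0..t})" by (rule compact_continuous_image[OF _ compact_Icc])
  then have bdd: "bdd_above (f ` {0..t})" by (simp add: bounded_imp_bdd_above compact_imp_bounded)
  have F_in: "?F q \<in> f ` {0..t}" if "q \<in> ?Q" for q using that t by auto
  then have bdd_F: "bdd_above (?F ` ?Q)" by (intro bdd_above_mono[OF bdd]) blast
  have "?Q \<noteq> {}" using t by (auto intro!: exI[of _ 0])
  then have le: "(SUP q\<in>?Q. ?F q) \<le> Sup (f ` {0..t})"
    using cSup_upper[OF F_in bdd] by (intro cSUP_least) auto
  obtain u where u: "u \<in> {0..t}" "Sup (f ` {0..t}) = f u"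
    using compact_attains_sup[OF cpt] t by (metis cSup_eq_maximum empty_iff atLeastAtMost_iff image_iff order_refl)
  have "f u \<le> (SUP q\<in>?Q. ?F q) + e" if e: "e > 0" for e
  proof -
    have "continuous (at u within {0..T}) f" using cont u t by (simp add: continuous_on_eq_continuous_within)
    then obtain d where d: "d > 0" "\<And>x. x \<in> {0..T} \<Longrightarrow> dist x u < d \<Longrightarrow> dist (f x) (f u) < e"
      using e unfolding continuous_within_eps_delta by blast
    obtain r where r: "r \<in> \<rat>" "u < r" "r < min (u + d) T"
      using Rats_dense_in_real[of u "min (u + d) T"] u t d by auto
    have "\<bar>?F r - f u\<bar> < e"
    proof (cases "r \<le> t")
      case True then show ?thesis using d(2)[of r] r u t by (auto simp: dist_real_def)
    next
      case False
      then show ?thesis using d(2)[of t] r u t by (auto simp: dist_real_def)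
    qed
    moreover have "?F r \<le> (SUP q\<in>?Q. ?F q)" using bdd_F r u t by (intro cSUP_upper) auto
    ultimately show ?thesis by linarith
  qed
  then have "f u \<le> (SUP q\<in>?Q. ?F q)" by (rule field_le_epsilon)
  with le u show ?thesis by linarith
qed

lemma borel_measurable_fst_comp [measurable]:
  "f \<in> borel_measurable M \<Longrightarrow> (\<lambda>x. fst (f x)) \<in> borel_measurable M"
  by (rule borel_measurable_continuous_on[OF continuous_on_fst[OF continuous_on_id]])

lemma borel_measurable_snd_comp [measurable]:
  "f \<in> borel_measurable M \<Longrightarrow> (\<lambda>x. snd (f x)) \<in> borel_measurable M"
  by (rule borel_measurable_continuous_on[OF continuous_on_snd[OF continuous_on_id]])

lemma measurable_running_max:
  assumes N: "sets N = sets (PathSpace T S0 Sg0 A0)" and T: "0 < T"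
  shows "(\<lambda>z. Sup ((\<lambda>u. fst (fst z u)) ` {0..snd z}))
           \<in> borel_measurable (restrict_space (N \<Otimes>\<^sub>M lborel) (space N \<times> {0<..<T}))"
proof -
  let ?R = "restrict_space (N \<Otimes>\<^sub>M lborel) (space N \<times> {0<..<T})"
  let ?Q = "\<rat> \<inter> {0..T}"
  let ?F = "\<lambda>z q. if q \<le> snd z then fst (fst z q) else fst (fst z (snd z))"
  have [measurable]: "(\<lambda>z. fst z (snd z)) \<in> borel_measurable ?R"
    by (rule measurable_path_eval_joint[OF N]) (use T in auto)
  have [measurable]: "snd \<in> borel_measurable ?R" by (rule measurable_restrict_space1) simp
  have "(\<lambda>z. ?F z q) \<in> borel_measurable ?R" if "q \<in> ?Q" for q
  proof -
    have "(\<lambda>z. fst z q) \<in> borel_measurable ?R"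
      using that by (intro measurable_restrict_space1 measurable_compose[OF measurable_fst measurable_path_eval[OF N]]) auto
    then show ?thesis by measurable
  qed
  moreover have "bdd_above (?F z ` ?Q)" if "z \<in> space ?R" for z
  proof -
    have "fst z \<in> space N" and "snd z \<in> {0<..<T}" using that by (auto simp: space_restrict_space space_pair_measure)
    then have "continuous_on {0..T} (\<lambda>u. fst (fst z u))"
      using PathSpace_path_continuous[OF N] by (intro continuous_on_fst) auto
    then have "bdd_above ((\<lambda>u. fst (fst z u)) ` {0..T})"
      by (intro bounded_imp_bdd_above compact_imp_bounded compact_continuous_image compact_Icc)
    then show ?thesis by (rule bdd_above_mono) (use \<open>snd z \<in> {0<..<T}\<close> in auto)
  qed
  ultimately have "(\<lambda>z. SUP q\<in>?Q. ?F z q) \<in> borel_measurable ?R"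
    by (intro borel_measurable_cSUP) (auto intro: countable_subset[OF _ countable_rat])
  then show ?thesis
  proof (rule measurable_cong[THEN iffD1, rotated])
    fix z assume "z \<in> space ?R"
    then have "fst z \<in> space N" and "snd z \<in> {0<..<T}" by (auto simp: space_restrict_space space_pair_measure)
    then show "(SUP q\<in>?Q. ?F z q) = Sup ((\<lambda>u. fst (fst z u)) ` {0..snd z})"
      using PathSpace_path_continuous[OF N] by (intro Sup_image_eq_SUP_Rats[symmetric] continuous_on_fst) auto
  qed
qed

lemma measurable_Xproc:
  assumes N: "sets N = sets (PathSpace T S0 Sg0 A0)" and T: "0 < T"
  shows "(\<lambda>z. (snd z, Xproc (fst z) (snd z)))
           \<in> borel_measurable (restrict_space (N \<Otimes>\<^sub>M lborel) (space N \<times> {0<..<T}))"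
proof -
  let ?R = "restrict_space (N \<Otimes>\<^sub>M lborel) (space N \<times> {0<..<T})"
  have [measurable]: "(\<lambda>z. fst z (snd z)) \<in> borel_measurable ?R"
    by (rule measurable_path_eval_joint[OF N]) (use T in auto)
  have [measurable]: "snd \<in> borel_measurable ?R" by (rule measurable_restrict_space1) simp
  note [measurable] = measurable_running_max[OF N T]
  show ?thesis unfolding Xproc_def by measurable
qed

lemma D0_in_borel: "D0 T \<in> sets borel"
proof -
  have "D0 T = {p. 0 < fst p} \<inter> {p. fst p < T} \<inter> {p. 0 < fst (snd p)} \<inter> {p. 0 < fst (snd (snd (snd p)))}
      \<inter> {p. 0 < snd (snd (snd (snd p)))}"
    by (auto simp: D0_def stS_def stM_def stSig_def)
  also have "open \<dots>"
    by (intro open_Int open_Collect_less continuous_intros)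
  finally show ?thesis by simp
qed

lemma measurable_comp_Xproc:
  assumes N: "sets N = sets (PathSpace T S0 Sg0 A0)" and T: "0 < T"
    and f: "(\<lambda>(t, x). f t x) \<in> borel_measurable (restrict_space borel (D0 T))"
  shows "(\<lambda>z. if (snd z, Xproc (fst z) (snd z)) \<in> D0 T then f (snd z) (Xproc (fst z) (snd z)) else 0)
           \<in> borel_measurable (restrict_space (N \<Otimes>\<^sub>M lborel) (space N \<times> {0<..<T}))"
proof -
  let ?R = "restrict_space (N \<Otimes>\<^sub>M lborel) (space N \<times> {0<..<T})"
  let ?P = "\<lambda>z. (snd z, Xproc (fst z) (snd z))"
  have Ph: "?P \<in> borel_measurable ?R" by (rule measurable_Xproc[OF N T])
  have S: "{z \<in> space ?R. ?P z \<in> D0 T} \<in> sets ?R"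
    using measurable_sets[OF Ph D0_in_borel] by (simp add: vimage_def Int_def conj_commute)
  have "?P \<in> measurable (restrict_space ?R {z. ?P z \<in> D0 T}) (restrict_space borel (D0 T))"
    by (rule measurable_restrict_space3[OF Ph]) auto
  then have "(\<lambda>z. (\<lambda>(t, x). f t x) (?P z)) \<in> borel_measurable (restrict_space ?R {z. ?P z \<in> D0 T})"
    by (rule measurable_compose[OF _ f])
  then show ?thesis
    by (subst measurable_If_restrict_space_iff[OF S]) simp
qed

lemma measurable_Xproc_integrand:
  assumes N: "sets N = sets (PathSpace T S0 Sg0 A0)" and T: "0 < T"
    and g: "(\<lambda>(t, x). g t x) \<in> borel_measurable (restrict_space borel (D0 T))"
  shows "(\<lambda>z. ennreal (if (snd z, Xproc (fst z) (snd z)) \<in> D0 T then g (snd z) (Xproc (fst z) (snd z)) else 0)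
              * indicator {0<..<T} (snd z)) \<in> borel_measurable (N \<Otimes>\<^sub>M lborel)"
proof -
  let ?\<Omega> = "space N \<times> {0<..<T}"
  have \<Omega>: "?\<Omega> \<inter> space (N \<Otimes>\<^sub>M lborel) \<in> sets (N \<Otimes>\<^sub>M lborel)"
    by (auto simp: space_pair_measure intro!: pair_measureI)
  have "(\<lambda>z. ennreal (if (snd z, Xproc (fst z) (snd z)) \<in> D0 T then g (snd z) (Xproc (fst z) (snd z)) else 0))
          \<in> borel_measurable (restrict_space (N \<Otimes>\<^sub>M lborel) ?\<Omega>)"
    using measurable_comp_Xproc[OF N T g] by measurable
  then have "(\<lambda>z. ennreal (if (snd z, Xproc (fst z) (snd z)) \<in> D0 T then g (snd z) (Xproc (fst z) (snd z)) else 0)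
                 * indicator ?\<Omega> z) \<in> borel_measurable (N \<Otimes>\<^sub>M lborel)"
    by (subst (asm) borel_measurable_restrict_space_iff_ennreal[OF \<Omega>])
  then show ?thesis
    by (rule measurable_cong[THEN iffD1, rotated]) (auto simp: space_pair_measure indicator_def)
qed

definition path_moment :: "real \<Rightarrow> real \<Rightarrow> sfun \<Rightarrow> path measure \<Rightarrow> ennreal" where
  "path_moment p T f P = (\<integral>\<^sup>+ \<omega>. (\<integral>\<^sup>+ t\<in>{0<..<T}. ennreal (\<bar>f t (Xproc \<omega> t)\<bar> powr p) \<partial>lborel) \<partial>P)"

lemma Lp_iff_path_moment:
  "f \<in> Lp p T Ps \<longleftrightarrow> (\<lambda>(t, x). f t x) \<in> borel_measurable (restrict_space borel (D0 T))
     \<and> (SUP P\<in>Ps. path_moment p T f P) < \<infinity>"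
  by (simp add: Lp_def path_moment_def)

lemma nn_integral_Xproc_le_sum:
  fixes g :: "nat \<Rightarrow> sfun" and h :: sfun
  assumes N: "sets N = sets (PathSpace T S0 Sg0 A0)" and T: "0 < T" and J: "finite J"
    and g_meas: "\<And>j. j \<in> J \<Longrightarrow> (\<lambda>(t, x). g j t x) \<in> borel_measurable (restrict_space borel (D0 T))"
    and g_nonneg: "\<And>j t x. j \<in> J \<Longrightarrow> 0 \<le> g j t x"
    and h_out: "\<And>t x. (t, x) \<notin> D0 T \<Longrightarrow> h t x = 0"
    and h_le: "\<And>t x. (t, x) \<in> D0 T \<Longrightarrow> \<bar>h t x\<bar> powr p \<le> C * (\<Sum>j\<in>J. g j t x)"
    and C: "0 \<le> C"
  shows "path_moment p T h N
    \<le> ennreal C * (\<Sum>j\<in>J. \<integral>\<^sup>+ \<omega>. (\<integral>\<^sup>+ t\<in>{0<..<T}.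
          ennreal (if (t, Xproc \<omega> t) \<in> D0 T then g j t (Xproc \<omega> t) else 0) \<partial>lborel) \<partial>N)"
proof -
  define G where "G j = (\<lambda>z. ennreal (if (snd z, Xproc (fst z) (snd z)) \<in> D0 T
      then g j (snd z) (Xproc (fst z) (snd z)) else 0) * indicator {0<..<T} (snd z))" for j
  have G_meas: "G j \<in> borel_measurable (N \<Otimes>\<^sub>M lborel)" if "j \<in> J" for j
    unfolding G_def by (rule measurable_Xproc_integrand[OF N T g_meas[OF that]])
  have "path_moment p T h N
      \<le> (\<integral>\<^sup>+ \<omega>. \<integral>\<^sup>+ t. ennreal C * (\<Sum>j\<in>J. G j (\<omega>, t)) \<partial>lborel \<partial>N)"
    unfolding path_moment_def
  proof (intro nn_integral_mono)
    fix \<omega> t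
    show "ennreal (\<bar>h t (Xproc \<omega> t)\<bar> powr p) * indicator {0<..<T} t \<le> ennreal C * (\<Sum>j\<in>J. G j (\<omega>, t))"
    proof (cases "(t, Xproc \<omega> t) \<in> D0 T \<and> t \<in> {0<..<T}")
      case True
      then have "ennreal (\<bar>h t (Xproc \<omega> t)\<bar> powr p) \<le> ennreal (C * (\<Sum>j\<in>J. g j t (Xproc \<omega> t)))"
        by (intro ennreal_leI h_le) simp
      also have "\<dots> = ennreal C * (\<Sum>j\<in>J. G j (\<omega>, t))"
        using True C g_nonneg by (simp add: G_def ennreal_mult sum_nonneg)
      finally show ?thesis using True by simp
    qed (auto simp: h_out indicator_def)
  qed
  also have "\<dots> = (\<integral>\<^sup>+ z. ennreal C * (\<Sum>j\<in>J. G j z) \<partial>(N \<Otimes>\<^sub>M lborel))"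
    by (rule lborel.nn_integral_fst[of "\<lambda>z. ennreal C * (\<Sum>j\<in>J. G j z)"]) (use G_meas in auto)
  also have "\<dots> = ennreal C * (\<Sum>j\<in>J. \<integral>\<^sup>+ z. G j z \<partial>(N \<Otimes>\<^sub>M lborel))"
    using G_meas by (simp add: nn_integral_cmult nn_integral_sum)
  also have "\<dots> = ennreal C * (\<Sum>j\<in>J. \<integral>\<^sup>+ \<omega>. \<integral>\<^sup>+ t. G j (\<omega>, t) \<partial>lborel \<partial>N)"
    using lborel.nn_integral_fst[OF G_meas] by simp
  finally show ?thesis unfolding G_def fst_conv snd_conv by simp
qed

lemma Lp_of_power_bound:
  fixes fs :: "nat \<Rightarrow> sfun" and h :: sfun
  assumes T: "0 < T"
    and Ps: "\<forall>P\<in>Ps. prob_space P \<and> sets P = sets (PathSpace T S0 Sg0 A0)"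
    and fs: "\<And>j. j < n \<Longrightarrow> fs j \<in> Lp q T Ps"
    and h_meas: "(\<lambda>(t, x). h t x) \<in> borel_measurable (restrict_space borel (D0 T))"
    and h_out: "\<And>t x. (t, x) \<notin> D0 T \<Longrightarrow> h t x = 0"
    and h_le: "\<And>t x. (t, x) \<in> D0 T \<Longrightarrow> \<bar>h t x\<bar> powr p \<le> C * (1 + (\<Sum>j<n. \<bar>fs j t x\<bar> powr q))"
    and C: "0 \<le> C"
  shows "h \<in> Lp p T Ps"
proof -
  define B where "B j = (SUP P\<in>Ps. path_moment q T (fs j) P)" for j
  define g :: "nat \<Rightarrow> sfun" where "g j t x = (if j < n then \<bar>fs j t x\<bar> powr q else 1)" for j t x
  have g_meas: "(\<lambda>(t, x). g j t x) \<in> borel_measurable (restrict_space borel (D0 T))" for j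
    using fs unfolding Lp_iff_path_moment g_def
    by (cases "j < n") (auto simp: case_prod_beta' intro: measurable_abs_powr)
  have "\<bar>h t x\<bar> powr p \<le> C * (\<Sum>j<Suc n. g j t x)" if "(t, x) \<in> D0 T" for t x
    using h_le[OF that] by (simp add: g_def add.commute)
  note bound = nn_integral_Xproc_le_sum[OF _ T finite_lessThan g_meas _ h_out this C]
  define m where "m P j = (\<integral>\<^sup>+ \<omega>. (\<integral>\<^sup>+ t\<in>{0<..<T}.
      ennreal (if (t, Xproc \<omega> t) \<in> D0 T then g j t (Xproc \<omega> t) else 0) \<partial>lborel) \<partial>P)" for P j
  have "path_moment p T h P
       \<le> ennreal C * (\<Sum>j<Suc n. if j < n then B j else ennreal T)" if P: "P \<in> Ps" for P
  proof -
    have "prob_space P" and N: "sets P = sets (PathSpace T S0 Sg0 A0)" using Ps P by auto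
    have "m P j \<le> (if j < n then B j else ennreal T)" for j
    proof (cases "j < n")
      case True
      have "m P j \<le> path_moment q T (fs j) P"
        using True unfolding m_def path_moment_def by (intro nn_integral_mono) (auto simp: g_def indicator_def)
      also have "\<dots> \<le> B j" unfolding B_def using P by (rule SUP_upper)
      finally show ?thesis using True by simp
    next
      case False
      have "m P j \<le> (\<integral>\<^sup>+ \<omega>. \<integral>\<^sup>+ t. indicator {0<..<T} t \<partial>lborel \<partial>P)"
        using False unfolding m_def by (intro nn_integral_mono) (auto simp: g_def indicator_def)
      also have "\<dots> = ennreal T" using T \<open>prob_space P\<close> by (simp add: prob_space.emeasure_space_1)
      finally show ?thesis using False by simp
    qed
    then show ?thesis
      using C by (intro order_trans[OF bound[OF N, folded m_def]] mult_left_mono sum_mono) (auto simp: g_def)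
  qed
  moreover have "B j < \<infinity>" if "j < n" for j using fs[OF that] unfolding Lp_iff_path_moment B_def by simp
  then have "ennreal C * (\<Sum>j<Suc n. if j < n then B j else ennreal T) < \<infinity>"
    by (simp add: ennreal_mult_less_top sum_Pinfty less_top)
  ultimately have "(SUP P\<in>Ps. path_moment p T h P) < \<infinity>"
    by (meson SUP_least le_less_trans)
  then show ?thesis unfolding Lp_iff_path_moment using h_meas by auto
qed

lemma sum_power4_le:
  fixes f :: "'a \<Rightarrow> real"
  shows "(\<Sum>i\<in>I. f i) ^ 4 \<le> card I ^ 3 * (\<Sum>i\<in>I. f i ^ 4)"
proof -
  have "(\<Sum>i\<in>I. f i) ^ 4 = ((\<Sum>i\<in>I. f i)\<^sup>2)\<^sup>2" by simp
  also have "\<dots> \<le> ((\<Sum>i\<in>I. (f i)\<^sup>2) * card I)\<^sup>2"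
    by (intro power_mono sum_squared_le_sum_of_squares) simp
  also have "\<dots> = (\<Sum>i\<in>I. (f i)\<^sup>2)\<^sup>2 * (card I)\<^sup>2" by (simp add: power_mult_distrib)
  also have "\<dots> \<le> ((\<Sum>i\<in>I. ((f i)\<^sup>2)\<^sup>2) * card I) * (card I)\<^sup>2"
    by (intro mult_right_mono sum_squared_le_sum_of_squares) simp
  also have "\<dots> = card I ^ 3 * (\<Sum>i\<in>I. f i ^ 4)"
    by (simp add: power3_eq_cube power2_eq_square power4_eq_xxxx mult_ac)
  finally show ?thesis .
qed

lemma Lp2_square_of_Lp4:
  fixes fs :: "nat \<Rightarrow> sfun"
  assumes T: "0 < T"
    and Ps: "\<forall>P\<in>Ps. prob_space P \<and> sets P = sets (PathSpace T S0 Sg0 A0)"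
    and fs: "\<And>j. j < n \<Longrightarrow> fs j \<in> Lp 4 T Ps"
  shows "(\<lambda>t x. if (t, x) \<in> D0 T then c * (1 + (\<Sum>j<n. \<bar>fs j t x\<bar>))\<^sup>2 else 0) \<in> Lp 2 T Ps"
proof (rule Lp_of_power_bound[OF T Ps fs])
  have "(\<lambda>(t, x). fs j t x) \<in> borel_measurable (restrict_space borel (D0 T))" if "j < n" for j
    using fs[OF that] by (simp add: Lp_iff_path_moment)
  then have "(\<lambda>(t, x). c * (1 + (\<Sum>j<n. \<bar>fs j t x\<bar>))\<^sup>2) \<in> borel_measurable (restrict_space borel (D0 T))"
    by (auto simp: case_prod_beta' intro!: borel_measurable_sum)
  then show "(\<lambda>(t, x). if (t, x) \<in> D0 T then c * (1 + (\<Sum>j<n. \<bar>fs j t x\<bar>))\<^sup>2 else 0)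
      \<in> borel_measurable (restrict_space borel (D0 T))"
    by (rule measurable_cong[THEN iffD1, rotated]) (auto simp: space_restrict_space)
next
  fix t x assume "(t, x) \<in> D0 T"
  let ?a = "\<lambda>j. if j < n then \<bar>fs j t x\<bar> else 1"
  have "(1 + (\<Sum>j<n. \<bar>fs j t x\<bar>)) ^ 4 = (\<Sum>j<Suc n. ?a j) ^ 4" by (simp add: add.commute)
  also have "\<dots> \<le> (Suc n) ^ 3 * (\<Sum>j<Suc n. ?a j ^ 4)"
    using sum_power4_le[of ?a "{..<Suc n}"] by simp
  also have "\<dots> = (Suc n) ^ 3 * (1 + (\<Sum>j<n. \<bar>fs j t x\<bar> powr 4))"
    by (simp add: add.commute)
  finally have "\<bar>c * (1 + (\<Sum>j<n. \<bar>fs j t x\<bar>))\<^sup>2\<bar> powr 2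
      \<le> c^2 * (Suc n) ^ 3 * (1 + (\<Sum>j<n. \<bar>fs j t x\<bar> powr 4))"
    by (simp add: power_mult_distrib mult.assoc mult_left_mono flip: power_mult)
  then show "\<bar>if (t, x) \<in> D0 T then c * (1 + (\<Sum>j<n. \<bar>fs j t x\<bar>))\<^sup>2 else 0\<bar> powr 2
      \<le> c^2 * (Suc n) ^ 3 * (1 + (\<Sum>j<n. \<bar>fs j t x\<bar> powr 4))"
    using \<open>(t, x) \<in> D0 T\<close> by simp
qed simp_all

(* The paper's vector v without its Sigma factors. *)
definition sensitivities :: "coef \<Rightarrow> coef \<Rightarrow> sfun \<Rightarrow> real \<Rightarrow> state \<Rightarrow> state" where
  "sensitivities \<beta> \<gamma> f t x = (pd_Sig f t x,
      ev \<beta> t x * pd_A f t x + (stS x)^2 * GammaOp \<gamma> f t x,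
      stS x * DeltaSig \<gamma> f t x,
      pd_Sig (pd_Sig f) t x)"

definition drift_term :: "real \<Rightarrow> state \<Rightarrow> state \<Rightarrow> real" where
  "drift_term Sg a \<zeta> = (case a of (a1, a2, a3, a4) \<Rightarrow> case \<zeta> of (nu, sg, eta, xi) \<Rightarrow>
     nu * a1 + 1/2 * a2 * (sg^2 - Sg^2) + sg * eta * a3 + 1/2 * (eta^2 + xi) * a4)"

lemma bV_eq_drift_term: "bV \<beta> \<gamma> V t x \<zeta> = drift_term (stSig x) (sensitivities \<beta> \<gamma> V t x) \<zeta>"
  by (cases \<zeta>) (simp add: bV_def drift_term_def sensitivities_def)

lemma H3_diff_eq_drift_term:
  "H3 \<alpha> \<beta> \<gamma> w t x \<zeta> - H3 \<alpha> \<beta> \<gamma> w t x (zeta0 (stSig x))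
     = drift_term (stSig x) (sensitivities \<beta> \<gamma> w t x) \<zeta>"
  by (cases \<zeta>) (simp add: H3_def drift_term_def sensitivities_def zeta0_def field_simps)

lemma abs_components_le_norm_zeta_diff:
  assumes "norm ((nu, sg, eta, xi) - zeta0 Sg) \<le> d"
  shows "\<bar>nu\<bar> \<le> d" "\<bar>sg - Sg\<bar> \<le> d" "\<bar>eta\<bar> \<le> d" "\<bar>xi\<bar> \<le> d"
proof -
  have eq: "(nu, sg, eta, xi) - zeta0 Sg = (nu, sg - Sg, eta, xi)" by (simp add: zeta0_def)
  have "norm (sg - Sg, eta, xi) \<le> d" "norm (eta, xi) \<le> d"
    using assms unfolding eq by (metis norm_snd_le order_trans snd_conv)+
  then show "\<bar>nu\<bar> \<le> d" "\<bar>sg - Sg\<bar> \<le> d" "\<bar>eta\<bar> \<le> d" "\<bar>xi\<bar> \<le> d"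
    using assms unfolding eq by (metis norm_fst_le norm_snd_le order_trans real_norm_def fst_conv snd_conv)+
qed

lemma abs_quadratic_form_le:
  fixes u v a b c d :: real
  assumes "\<bar>u\<bar> \<le> d" "\<bar>v\<bar> \<le> d"
  shows "\<bar>u^2 * a + 2 * u * v * b + v^2 * c\<bar> \<le> (\<bar>a\<bar> + 2 * \<bar>b\<bar> + \<bar>c\<bar>) * d^2"
proof -
  have "u^2 \<le> d^2" "v^2 \<le> d^2" "\<bar>u * v\<bar> \<le> d^2"
    using assms power_mono[OF assms(1) abs_ge_zero, of 2] power_mono[OF assms(2) abs_ge_zero, of 2]
    by (auto simp: power2_eq_square abs_mult intro: mult_mono)
  then have "\<bar>u^2 * a\<bar> \<le> d^2 * \<bar>a\<bar>" "\<bar>u * v * b\<bar> \<le> d^2 * \<bar>b\<bar>" "\<bar>v^2 * c\<bar> \<le> d^2 * \<bar>c\<bar>"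
    by (auto simp: abs_mult intro: mult_right_mono)
  moreover have "\<bar>2 * u * v * b\<bar> = 2 * \<bar>u * v * b\<bar>" by (simp add: abs_mult)
  ultimately show ?thesis
    using abs_triangle_ineq[of "u^2 * a + 2 * u * v * b" "v^2 * c"] abs_triangle_ineq[of "u^2 * a" "2 * u * v * b"]
    by (simp add: algebra_simps)
qed

lemma abs_drift_term_le:
  assumes zeta: "norm ((nu, sg, eta, xi) - zeta0 Sg) \<le> d"
    and bounds: "\<bar>sg\<bar> \<le> s" "\<bar>Sg\<bar> \<le> s" "\<bar>eta\<bar> \<le> e" "0 \<le> xi"
  shows "\<bar>drift_term Sg (a1, a2, a3, a4) (nu, sg, eta, xi)\<bar>
           \<le> (1 + s + (e + 1) / 2) * d * (\<bar>a1\<bar> + \<bar>a2\<bar> + \<bar>a3\<bar> + \<bar>a4\<bar>)"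
proof -
  note comp = abs_components_le_norm_zeta_diff[OF zeta]
  have d: "0 \<le> d" and s: "0 \<le> s" and e: "0 \<le> e" using comp bounds by linarith+
  have "sg^2 - Sg^2 = (sg + Sg) * (sg - Sg)" by (simp add: power2_eq_square algebra_simps)
  moreover have "\<bar>sg + Sg\<bar> \<le> 2 * s" using abs_triangle_ineq[of sg Sg] bounds by linarith
  ultimately have "\<bar>sg^2 - Sg^2\<bar> \<le> (2 * s) * d"
    using comp by (simp only: abs_mult) (intro mult_mono, auto)
  then have c2: "\<bar>1/2 * (sg^2 - Sg^2)\<bar> \<le> s * d" by simp
  have c3: "\<bar>sg * eta\<bar> \<le> s * d" unfolding abs_mult using bounds comp by (intro mult_mono) auto
  have "eta^2 = \<bar>eta\<bar> * \<bar>eta\<bar>" by (simp add: power2_eq_square)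
  also have "\<dots> \<le> e * d" using bounds comp by (intro mult_mono) auto
  finally have "eta^2 \<le> e * d" .
  then have c4: "\<bar>1/2 * (eta^2 + xi)\<bar> \<le> (e + 1) / 2 * d"
    using comp bounds by (simp add: algebra_simps)
  let ?c = "1 + s + (e + 1) / 2"
  have "drift_term Sg (a1, a2, a3, a4) (nu, sg, eta, xi)
      = nu * a1 + (1/2 * (sg^2 - Sg^2)) * a2 + (sg * eta) * a3 + (1/2 * (eta^2 + xi)) * a4"
    by (simp add: drift_term_def)
  then have "\<bar>drift_term Sg (a1, a2, a3, a4) (nu, sg, eta, xi)\<bar>
      \<le> \<bar>nu\<bar> * \<bar>a1\<bar> + \<bar>1/2 * (sg^2 - Sg^2)\<bar> * \<bar>a2\<bar> + \<bar>sg * eta\<bar> * \<bar>a3\<bar>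
         + \<bar>1/2 * (eta^2 + xi)\<bar> * \<bar>a4\<bar>"
    by (simp only: abs_mult[symmetric])
  also have "\<dots> \<le> (?c * d) * \<bar>a1\<bar> + (?c * d) * \<bar>a2\<bar> + (?c * d) * \<bar>a3\<bar> + (?c * d) * \<bar>a4\<bar>"
  proof -
    have "1 * d \<le> ?c * d" "s * d \<le> ?c * d" "(e + 1) / 2 * d \<le> ?c * d"
      using s e by (intro mult_right_mono[OF _ d], simp)+
    then show ?thesis using comp c2 c3 c4 by (intro add_mono mult_right_mono) linarith+
  qed
  finally show ?thesis by (simp only: distrib_left)
qed

lemma abs_H3_diff_le:
  assumes zeta: "norm ((nu, sg, eta, xi) - zeta0 (stSig x)) \<le> d"
    and bounds: "\<bar>sg\<bar> \<le> s" "\<bar>stSig x\<bar> \<le> s" "\<bar>eta\<bar> \<le> e" "0 \<le> xi"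
  shows "\<bar>H3 \<alpha> \<beta> \<gamma> w t x (nu, sg, eta, xi) - H3 \<alpha> \<beta> \<gamma> w t x (zeta0 (stSig x))\<bar>
           \<le> (1 + s + (e + 1) / 2) * d * (\<bar>pd_Sig w t x\<bar>
               + \<bar>ev \<beta> t x * pd_A w t x + (stS x)^2 * GammaOp \<gamma> w t x\<bar>
               + \<bar>stS x * DeltaSig \<gamma> w t x\<bar> + \<bar>pd_Sig (pd_Sig w) t x\<bar>)"
  using abs_drift_term_le[OF zeta bounds] by (simp add: H3_diff_eq_drift_term sensitivities_def)

lemma utility_ok_risk_aversion_nonneg:
  assumes "utility_ok U"
  shows "0 \<le> - deriv (deriv U) y / deriv U y"
  using assms unfolding utility_ok_def by (metis divide_nonneg_pos neg_0_le_iff_le less_imp_le)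

lemma abs_H2_le:
  assumes V: "\<bar>pd_Sig V t x\<bar> \<le> k" "\<bar>ev \<beta> t x * pd_A V t x + (stS x)^2 * GammaOp \<gamma> V t x\<bar> \<le> k"
      "\<bar>stS x * DeltaSig \<gamma> V t x\<bar> \<le> k" "\<bar>pd_Sig (pd_Sig V) t x\<bar> \<le> k"
    and w: "0 \<le> w t x" "w t x \<le> Kw"
    and U: "utility_ok U"
    and zeta: "norm ((nu, sg, eta, xi) - zeta0 (stSig x)) \<le> d"
    and bounds: "\<bar>sg\<bar> \<le> s" "\<bar>stSig x\<bar> \<le> s" "\<bar>eta\<bar> \<le> e" "0 \<le> xi"
    and \<psi>: "0 \<le> \<psi>"
  shows "\<bar>H2 \<beta> \<gamma> V U w \<psi> t x y (nu, sg, eta, xi)\<bar>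
           \<le> 2 * k * d^2 + (- deriv (deriv U) y / deriv U y) * (4 * (1 + s + (e + 1) / 2) * k * Kw * d) * \<psi>"
proof -
  define R where "R = - deriv (deriv U) y / deriv U y"
  have R: "0 \<le> R" unfolding R_def by (rule utility_ok_risk_aversion_nonneg[OF U])
  note comp = abs_components_le_norm_zeta_diff[OF zeta]
  have d: "0 \<le> d" using comp by linarith
  define c where "c = 1 + s + (e + 1) / 2"
  have c: "0 \<le> c" using bounds unfolding c_def by (smt (verit) abs_ge_zero divide_nonneg_pos)
  let ?B = "ev \<beta> t x * pd_A V t x + (stS x)^2 * GammaOp \<gamma> V t x"
  let ?D = "stS x * DeltaSig \<gamma> V t x"
  let ?Q = "(sg - stSig x)^2 * ?B + 2 * (sg - stSig x) * eta * ?D + eta^2 * pd_Sig (pd_Sig V) t x"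
  let ?b = "bV \<beta> \<gamma> V t x (nu, sg, eta, xi)"
  have "\<bar>?Q\<bar> \<le> (\<bar>?B\<bar> + 2 * \<bar>?D\<bar> + \<bar>pd_Sig (pd_Sig V) t x\<bar>) * d^2"
    by (rule abs_quadratic_form_le[OF comp(2,3)])
  also have "\<dots> \<le> (4 * k) * d^2" using V by (intro mult_right_mono) auto
  finally have Q: "\<bar>-1/2 * ?Q\<bar> \<le> 2 * k * d^2" by (simp add: abs_mult)
  have "\<bar>?b\<bar> \<le> c * d * (\<bar>pd_Sig V t x\<bar> + \<bar>?B\<bar> + \<bar>?D\<bar> + \<bar>pd_Sig (pd_Sig V) t x\<bar>)"
    using abs_drift_term_le[OF zeta bounds] unfolding bV_eq_drift_term sensitivities_def c_def .
  also have "\<dots> \<le> c * d * (4 * k)" using V c d by (intro mult_left_mono) auto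
  finally have "\<bar>?b\<bar> * w t x * \<psi> \<le> (c * d * (4 * k)) * Kw * \<psi>"
    using w \<psi> by (intro mult_right_mono mult_mono) auto
  then have "R * (\<bar>?b\<bar> * w t x * \<psi>) \<le> R * ((c * d * (4 * k)) * Kw * \<psi>)"
    by (rule mult_left_mono[OF _ R])
  then have "\<bar>R * ?b * w t x * \<psi>\<bar> \<le> R * (4 * c * k * Kw * d) * \<psi>"
    using R w \<psi> by (simp add: abs_mult mult_ac)
  moreover have "H2 \<beta> \<gamma> V U w \<psi> t x y (nu, sg, eta, xi) = -1/2 * ?Q - R * ?b * w t x * \<psi>"
    by (simp add: H2_def R_def)
  ultimately show ?thesis
    using Q abs_triangle_ineq4[of "-1/2 * ?Q" "R * ?b * w t x * \<psi>"]
    unfolding R_def[symmetric] c_def[symmetric] by linarith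
qed

lemma abs_H2_le_square:
  assumes V: "\<bar>pd_Sig V t x\<bar> \<le> k" "\<bar>ev \<beta> t x * pd_A V t x + (stS x)^2 * GammaOp \<gamma> V t x\<bar> \<le> k"
      "\<bar>stS x * DeltaSig \<gamma> V t x\<bar> \<le> k" "\<bar>pd_Sig (pd_Sig V) t x\<bar> \<le> k"
    and w: "0 \<le> w t x" "w t x \<le> Kw"
    and U: "utility_ok U"
    and zeta: "norm ((nu, sg, eta, xi) - zeta0 (stSig x)) \<le> \<kappa> * \<psi>"
    and bounds: "\<bar>sg\<bar> \<le> s" "\<bar>stSig x\<bar> \<le> s" "\<bar>eta\<bar> \<le> e" "0 \<le> xi"
    and \<psi>: "0 \<le> \<psi>" and \<kappa>: "0 \<le> \<kappa>" "\<kappa> \<le> S" "1 \<le> S"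
    and c: "k * (2 + 4 * (1 + s + (e + 1) / 2) * Kw) \<le> c"
  shows "\<bar>H2 \<beta> \<gamma> V U w \<psi> t x y (nu, sg, eta, xi)\<bar>
           \<le> c * S^2 * (1 + - deriv (deriv U) y / deriv U y) * \<psi>^2"
proof -
  define R where "R = - deriv (deriv U) y / deriv U y"
  define a where "a = 4 * (1 + s + (e + 1) / 2) * k * Kw"
  have R: "0 \<le> R" unfolding R_def by (rule utility_ok_risk_aversion_nonneg[OF U])
  have k: "0 \<le> k" using V by linarith
  have a: "0 \<le> a" unfolding a_def using k w bounds
    by (smt (verit) abs_ge_zero divide_nonneg_pos mult_nonneg_nonneg)
  have S: "\<kappa>^2 \<le> S^2" "\<kappa> \<le> S^2"
    using \<kappa> by (auto intro: power_mono order_trans[OF _ power_increasing[of 1 2 S]])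
  have "\<bar>H2 \<beta> \<gamma> V U w \<psi> t x y (nu, sg, eta, xi)\<bar> \<le> 2 * k * (\<kappa> * \<psi>)^2 + R * (a * (\<kappa> * \<psi>)) * \<psi>"
    using abs_H2_le[where w=w and t=t and x=x, OF V w U zeta bounds \<psi>]
    unfolding R_def a_def by (simp add: mult_ac)
  also have "\<dots> = (2 * k * \<kappa>^2 + R * a * \<kappa>) * \<psi>^2" by (simp add: power2_eq_square algebra_simps)
  also have "\<dots> \<le> (2 * k * S^2 + R * a * S^2) * \<psi>^2"
    using S k R a by (intro mult_right_mono add_mono mult_left_mono) auto
  also have "\<dots> \<le> (2 * k + a) * S^2 * (1 + R) * \<psi>^2"
    using R a k by (intro mult_right_mono) (auto simp: algebra_simps intro!: mult_right_mono)
  also have "\<dots> \<le> c * S^2 * (1 + R) * \<psi>^2"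
    using c R unfolding a_def by (intro mult_right_mono) (auto simp: algebra_simps)
  finally show ?thesis unfolding R_def .
qed

lemma abs_H3_diff_le_square:
  assumes zeta: "norm ((nu, sg, eta, xi) - zeta0 (stSig x)) \<le> \<kappa> * \<psi>"
    and bounds: "\<bar>sg\<bar> \<le> s" "\<bar>stSig x\<bar> \<le> s" "\<bar>eta\<bar> \<le> e" "0 \<le> xi"
    and \<psi>: "0 \<le> \<psi>" and \<kappa>: "0 \<le> \<kappa>" "\<kappa> \<le> S"
    and W: "\<bar>pd_Sig w t x\<bar> + \<bar>ev \<beta> t x * pd_A w t x + (stS x)^2 * GammaOp \<gamma> w t x\<bar>
              + \<bar>stS x * DeltaSig \<gamma> w t x\<bar> + \<bar>pd_Sig (pd_Sig w) t x\<bar> \<le> S"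
    and c: "1 + s + (e + 1) / 2 \<le> c"
  shows "\<bar>H3 \<alpha> \<beta> \<gamma> w t x (nu, sg, eta, xi) - H3 \<alpha> \<beta> \<gamma> w t x (zeta0 (stSig x))\<bar> \<le> c * S^2 * \<psi>"
proof -
  define c1 where "c1 = 1 + s + (e + 1) / 2"
  have c1: "0 \<le> c1" using bounds unfolding c1_def by (smt (verit) abs_ge_zero divide_nonneg_pos)
  have "\<bar>H3 \<alpha> \<beta> \<gamma> w t x (nu, sg, eta, xi) - H3 \<alpha> \<beta> \<gamma> w t x (zeta0 (stSig x))\<bar> \<le> c1 * (\<kappa> * \<psi>) * S"
    using abs_H3_diff_le[OF zeta bounds, of \<alpha> \<beta> \<gamma> w t] W c1 \<kappa> \<psi> unfolding c1_def
    by (smt (verit) mult_left_mono mult_nonneg_nonneg)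
  also have "\<dots> \<le> c1 * (S * \<psi>) * S"
    using \<kappa> c1 \<psi> by (intro mult_right_mono mult_left_mono) auto
  also have "\<dots> = c1 * (S^2 * \<psi>)" by (simp add: power2_eq_square mult_ac)
  also have "\<dots> \<le> c * (S^2 * \<psi>)" using c \<psi> unfolding c1_def by (intro mult_right_mono) auto
  finally show ?thesis by (simp add: mult_ac)
qed

theorem corollary5p11:
  fixes T S0 Sig0 A0 lo hi TC :: real
    and nl nh sl sh el eh xh :: real
    and pn ps pe px :: real
    and \<alpha> \<beta> \<gamma> \<delta> :: coef
    and C :: "real \<Rightarrow> real \<Rightarrow> real \<Rightarrow> real" and Cpay :: "real \<Rightarrow> real"
    and V w :: sfun and Vpay :: "real \<times> real \<times> real \<Rightarrow> real"
    and U :: "real \<Rightarrow> real"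
    and Ps :: "path measure set"
    and KC K :: sfun and KV Kw :: real
  assumes T_pos: "0 < T" and S0_pos: "0 < S0" and Sig0_pos: "0 < Sig0"
    and Sig_bounds: "0 < lo" "lo < Sig0" "Sig0 < hi"
    and Z_consts: "nl < 0" "0 < nh" "0 < sl" "sl < lo" "hi < sh" "el < 0" "0 < eh" "0 < xh"
    and Psi_pos: "0 < pn" "0 < ps" "0 < pe" "0 < px"
    and models: "\<forall>P\<in>Ps. prob_space P \<and> sets P = sets (PathSpace T S0 Sig0 A0)"
    and models_Sig: "\<forall>P\<in>Ps. AE \<omega> in P. AE t in lborel. 0 < t \<and> t < T \<longrightarrow>
                        lo \<le> stSig (Xproc \<omega> t) \<and> stSig (Xproc \<omega> t) \<le> hi"
    and call: "call_ok T TC lo hi Cpay C"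
    and call_bd: "\<forall>(t, x) \<in> Dom T lo hi. pd_Sig (liftC C) t x \<noteq> 0 \<and>
                   \<bar>pd_Sig (pd_Sig (liftC C)) t x\<bar> \<le> KC t x * (\<bar>pd_Sig (liftC C) t x\<bar>
                      + \<bar>(stS x)^2 * pd_S (pd_S (liftC C)) t x\<bar> + \<bar>stS x * pd_Sig (pd_S (liftC C)) t x\<bar>)"
    and KC_L2: "KC \<in> Lp 2 T Ps"
    and V_sol: "V_pde \<alpha> \<beta> \<gamma> \<delta> T lo hi Vpay V"
    and V_bd: "\<forall>(t, x) \<in> Dom T lo hi. \<bar>pd_Sig V t x\<bar> \<le> KV
                   \<and> \<bar>ev \<beta> t x * pd_A V t x + (stS x)^2 * GammaOp \<gamma> V t x\<bar> \<le> KV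
                   \<and> \<bar>stS x * DeltaSig \<gamma> V t x\<bar> \<le> KV \<and> \<bar>pd_Sig (pd_Sig V) t x\<bar> \<le> KV"
    and w_sol: "w_pde (pn, ps, pe, px) C \<alpha> \<beta> \<gamma> \<delta> T lo hi V w"
    and w_bd: "\<forall>(t, x) \<in> Dom T lo hi. 0 \<le> w t x \<and> w t x \<le> Kw"
    and w_L4: "pd_Sig w \<in> Lp 4 T Ps"
              "(\<lambda>t x. stS x * (pd_S w t x + ev \<gamma> t x * pd_A w t x)) \<in> Lp 4 T Ps"
              "(\<lambda>t x. ev \<beta> t x * pd_A w t x + (stS x)^2 * GammaOp \<gamma> w t x) \<in> Lp 4 T Ps"
              "(\<lambda>t x. stS x * DeltaSig \<gamma> w t x) \<in> Lp 4 T Ps"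
              "pd_Sig (pd_Sig w) \<in> Lp 4 T Ps"
    and U_ok: "utility_ok U"
    and K_L4: "K \<in> Lp 4 T Ps" and K_nonneg: "\<forall>(t, x) \<in> D0 T. 0 \<le> K t x"
  shows "\<exists>K23 \<in> Lp 2 T Ps. \<forall>t x y \<zeta> \<psi>.
           (t, x) \<in> Dom T lo hi \<and> \<zeta> \<in> Zbox nl nh sl sh el eh xh \<and> 0 < \<psi> \<and>
           norm (\<zeta> - zeta0 (stSig x)) \<le> K t x * \<psi> \<longrightarrow>
             \<bar>H2 \<beta> \<gamma> V U w \<psi> t x y \<zeta>\<bar> \<le> K23 t x * (1 + - deriv (deriv U) y / deriv U y) * \<psi>^2
           \<and> \<bar>H3 \<alpha> \<beta> \<gamma> w t x \<zeta> - H3 \<alpha> \<beta> \<gamma> w t x (zeta0 (stSig x))\<bar> \<le> K23 t x * \<psi>"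
proof -
  define c where "c = \<bar>KV\<bar> * (2 + 4 * (1 + sh + (eh - el + 1) / 2) * \<bar>Kw\<bar>) + (1 + sh + (eh - el + 1) / 2)"
  define fs :: "nat \<Rightarrow> sfun" where "fs = (!) [K, pd_Sig w,
      \<lambda>t x. ev \<beta> t x * pd_A w t x + (stS x)^2 * GammaOp \<gamma> w t x,
      \<lambda>t x. stS x * DeltaSig \<gamma> w t x, pd_Sig (pd_Sig w)]"
  define K23 where "K23 t x = (if (t, x) \<in> D0 T then c * (1 + (\<Sum>j<5. \<bar>fs j t x\<bar>))\<^sup>2 else 0)" for t x
  have "K23 \<in> Lp 2 T Ps"
    unfolding K23_def[abs_def] using K_L4 w_L4
    by (intro Lp2_square_of_Lp4[OF T_pos models]) (auto simp: fs_def less_Suc_eq numeral_eq_Suc)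
  moreover have "\<bar>H2 \<beta> \<gamma> V U w \<psi> t x y \<zeta>\<bar> \<le> K23 t x * (1 + - deriv (deriv U) y / deriv U y) * \<psi>^2
           \<and> \<bar>H3 \<alpha> \<beta> \<gamma> w t x \<zeta> - H3 \<alpha> \<beta> \<gamma> w t x (zeta0 (stSig x))\<bar> \<le> K23 t x * \<psi>"
    if Dom: "(t, x) \<in> Dom T lo hi" and Z: "\<zeta> \<in> Zbox nl nh sl sh el eh xh" and \<psi>: "0 < \<psi>"
      and zeta: "norm (\<zeta> - zeta0 (stSig x)) \<le> K t x * \<psi>" for t x y \<zeta> \<psi>
  proof -
    obtain nu sg eta xi where \<zeta>: "\<zeta> = (nu, sg, eta, xi)" by (cases \<zeta>)
    have D0: "(t, x) \<in> D0 T" using Dom by (simp add: Dom_def)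
    have bounds: "\<bar>sg\<bar> \<le> sh" "\<bar>stSig x\<bar> \<le> sh" "\<bar>eta\<bar> \<le> eh - el" "0 \<le> xi"
      using Z Dom Sig_bounds Z_consts by (auto simp: Zbox_def Dom_def \<zeta>)
    define S where "S = 1 + (\<Sum>j<5. \<bar>fs j t x\<bar>)"
    have S: "0 \<le> K t x" "K t x \<le> S" "1 \<le> S"
      "\<bar>pd_Sig w t x\<bar> + \<bar>ev \<beta> t x * pd_A w t x + (stS x)^2 * GammaOp \<gamma> w t x\<bar>
         + \<bar>stS x * DeltaSig \<gamma> w t x\<bar> + \<bar>pd_Sig (pd_Sig w) t x\<bar> \<le> S"
      using K_nonneg D0 by (auto simp: S_def fs_def numeral_eq_Suc)
    have V: "\<bar>pd_Sig V t x\<bar> \<le> \<bar>KV\<bar>" "\<bar>ev \<beta> t x * pd_A V t x + (stS x)^2 * GammaOp \<gamma> V t x\<bar> \<le> \<bar>KV\<bar>"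
      "\<bar>stS x * DeltaSig \<gamma> V t x\<bar> \<le> \<bar>KV\<bar>" "\<bar>pd_Sig (pd_Sig V) t x\<bar> \<le> \<bar>KV\<bar>"
      using V_bd Dom by fastforce+
    have w: "0 \<le> w t x" "w t x \<le> \<bar>Kw\<bar>" using w_bd Dom by fastforce+
    have c: "\<bar>KV\<bar> * (2 + 4 * (1 + sh + (eh - el + 1) / 2) * \<bar>Kw\<bar>) \<le> c" "1 + sh + (eh - el + 1) / 2 \<le> c"
      using bounds unfolding c_def by auto
    have "K23 t x = c * S^2" using D0 by (simp add: K23_def S_def)
    with abs_H2_le_square[where w=w and t=t and x=x, OF V w U_ok zeta[unfolded \<zeta>] bounds _ S(1-3) c(1)]
      abs_H3_diff_le_square[where w=w and t=t and x=x, OF zeta[unfolded \<zeta>] bounds _ S(1,2,4) c(2)] \<psi>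
    show ?thesis unfolding \<zeta> by simp
  qed
  ultimately show ?thesis by blast
qed

end
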